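(* Let $G$ be a strongly contracting group. Then $\mathrm{WP}_G\in\mathrm{DTIME}_*(n)$.
   Context: Automaton groups: an invertible, minimal automaton $A=(S,X,t,o)$ over a finite alphabet $X$ with state set $S$ closed under inversion generates the group $G_A$ of transformations $o(s,\cdot)$ of $X^{*}$; for a word $w\in S^{*}$ and $x\in X$, the section $w|_x\in S^{*}$ is the word of the same length obtained by running the dual automaton: $(s_1\cdots s_n)|_x=s_1'\cdots s_n'$ with $s_i'=t(s_i,x_i)$, $x_1=x$, $x_{i+1}=o(s_i,x_i)$. $l_S$ denotes word length in $G$ w.r.t. $S$. The automaton group is strongly contracting (for that automaton) if $\sum_{x\in X} l_S(w|_x)<|w|$ for all sufficiently long words $w\in S^{*}$; a group is strongly contracting if it is so for some automaton representation. $\mathrm{DTIME}_*(n)$ is the class of languages decided in linear time by a deterministic multi-tape Turing machine. *)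

theory Defs
  imports Main
begin

text \<open>An automaton (S, X, t, o) with finite state type 's and finite alphabet 'x.
  tr = t (transition), outp = o (output).\<close>

fun act :: "('s \<Rightarrow> 'x \<Rightarrow> 's) \<Rightarrow> ('s \<Rightarrow> 'x \<Rightarrow> 'x) \<Rightarrow> 's \<Rightarrow> 'x list \<Rightarrow> 'x list" where
  "act tr outp s [] = []"
| "act tr outp s (x # u) = outp s x # act tr outp (tr s x) u"

text \<open>Action of a word s1...sn of states: s1 acts first.\<close>
definition act_word :: "('s \<Rightarrow> 'x \<Rightarrow> 's) \<Rightarrow> ('s \<Rightarrow> 'x \<Rightarrow> 'x) \<Rightarrow> 's list \<Rightarrow> 'x list \<Rightarrow> 'x list" where
  "act_word tr outp w u = fold (act tr outp) w u"

fun section_word :: "('s \<Rightarrow> 'x \<Rightarrow> 's) \<Rightarrow> ('s \<Rightarrow> 'x \<Rightarrow> 'x) \<Rightarrow> 's list \<Rightarrow> 'x \<Rightarrow> 's list" where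
  "section_word tr outp [] x = []"
| "section_word tr outp (s # w) x = tr s x # section_word tr outp w (outp s x)"

definition len_S :: "('s \<Rightarrow> 'x \<Rightarrow> 's) \<Rightarrow> ('s \<Rightarrow> 'x \<Rightarrow> 'x) \<Rightarrow> 's list \<Rightarrow> nat" where
  "len_S tr outp w = (LEAST n. \<exists>v. length v = n \<and> act_word tr outp v = act_word tr outp w)"

definition invertible_automaton :: "('s \<Rightarrow> 'x \<Rightarrow> 's) \<Rightarrow> ('s \<Rightarrow> 'x \<Rightarrow> 'x) \<Rightarrow> bool" where
  "invertible_automaton tr outp \<longleftrightarrow> (\<forall>s. bij (outp s))"

definition minimal_automaton :: "('s \<Rightarrow> 'x \<Rightarrow> 's) \<Rightarrow> ('s \<Rightarrow> 'x \<Rightarrow> 'x) \<Rightarrow> bool" where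
  "minimal_automaton tr outp \<longleftrightarrow> inj (act tr outp)"

definition inverse_closed_automaton :: "('s \<Rightarrow> 'x \<Rightarrow> 's) \<Rightarrow> ('s \<Rightarrow> 'x \<Rightarrow> 'x) \<Rightarrow> bool" where
  "inverse_closed_automaton tr outp \<longleftrightarrow>
     (\<forall>s. \<exists>s'. \<forall>u. act tr outp s' (act tr outp s u) = u \<and> act tr outp s (act tr outp s' u) = u)"

definition strongly_contracting_automaton :: "('s::finite \<Rightarrow> 'x::finite \<Rightarrow> 's) \<Rightarrow> ('s \<Rightarrow> 'x \<Rightarrow> 'x) \<Rightarrow> bool" where
  "strongly_contracting_automaton tr outp \<longleftrightarrow>
     (\<exists>N. \<forall>w. N \<le> length w \<longrightarrow> (\<Sum>x\<in>UNIV. len_S tr outp (section_word tr outp w x)) < length w)"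

definition word_problem :: "('s \<Rightarrow> 'x \<Rightarrow> 's) \<Rightarrow> ('s \<Rightarrow> 'x \<Rightarrow> 'x) \<Rightarrow> 's list set" where
  "word_problem tr outp = {w. act_word tr outp w = id}"

text \<open>States and tape symbols are natural numbers from finite sets Q and Gamma;
  0 is the blank symbol. Input letters of type 'i are written via an injective
  encoding into Gamma - {0} on tape 0 (positions 0..n-1); all heads start at 0.
  delta q reads the list of the k scanned symbols and returns the new state,
  the k written symbols and the k head moves in {-1,0,1}.\<close>
record 'i tm =
  tm_k :: nat
  tm_Q :: "nat set"
  tm_Gamma :: "nat set"
  tm_enc :: "'i \<Rightarrow> nat"
  tm_start :: nat
  tm_acc :: "nat set"
  tm_rej :: "nat set"
  tm_delta :: "nat \<Rightarrow> nat list \<Rightarrow> nat \<times> nat list \<times> int list"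

definition wf_tm :: "'i tm \<Rightarrow> bool" where
  "wf_tm M \<longleftrightarrow> 1 \<le> tm_k M \<and> finite (tm_Q M) \<and> finite (tm_Gamma M) \<and> 0 \<in> tm_Gamma M
    \<and> inj (tm_enc M) \<and> (\<forall>a. tm_enc M a \<in> tm_Gamma M - {0})
    \<and> tm_start M \<in> tm_Q M \<and> tm_acc M \<subseteq> tm_Q M \<and> tm_rej M \<subseteq> tm_Q M
    \<and> tm_acc M \<inter> tm_rej M = {}
    \<and> (\<forall>q \<in> tm_Q M - (tm_acc M \<union> tm_rej M). \<forall>r. length r = tm_k M \<and> set r \<subseteq> tm_Gamma M \<longrightarrow>
          (case tm_delta M q r of (q', ws, ms) \<Rightarrow>
             q' \<in> tm_Q M \<and> length ws = tm_k M \<and> set ws \<subseteq> tm_Gamma M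
             \<and> length ms = tm_k M \<and> set ms \<subseteq> {-1, 0, 1}))"

type_synonym config = "nat \<times> (int \<Rightarrow> nat) list \<times> int list"

definition tm_step :: "'i tm \<Rightarrow> config \<Rightarrow> config" where
  "tm_step M c = (case c of (q, ts, hs) \<Rightarrow>
     if q \<in> tm_acc M \<union> tm_rej M then c
     else (case tm_delta M q (map (\<lambda>(t, h). t h) (zip ts hs)) of (q', ws, ms) \<Rightarrow>
       (q', map (\<lambda>((t, h), w). t(h := w)) (zip (zip ts hs) ws),
            map (\<lambda>(h, m). h + m) (zip hs ms))))"

definition tm_init :: "'i tm \<Rightarrow> 'i list \<Rightarrow> config" where
  "tm_init M w = (tm_start M,
     (\<lambda>i. if 0 \<le> i \<and> i < int (length w) then tm_enc M (w ! nat i) else 0)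
       # replicate (tm_k M - 1) (\<lambda>_. 0),
     replicate (tm_k M) 0)"

definition decides_in_time :: "'i tm \<Rightarrow> 'i list set \<Rightarrow> (nat \<Rightarrow> nat) \<Rightarrow> bool" where
  "decides_in_time M L T \<longleftrightarrow> (\<forall>w. \<exists>n \<le> T (length w).
     let q = fst ((tm_step M ^^ n) (tm_init M w)) in
     q \<in> tm_acc M \<union> tm_rej M \<and> (q \<in> tm_acc M \<longleftrightarrow> w \<in> L))"

definition DTIME_lin :: "'i list set \<Rightarrow> bool" where
  "DTIME_lin L \<longleftrightarrow> (\<exists>(M :: 'i tm) c. wf_tm M \<and> decides_in_time M L (\<lambda>n. c * n + c))"

end

theory Submission
  imports Defs "HOL-Library.Countable"
begin

text \<open>
  A word of states acts trivially iff it fixes every root letter and all its sections act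
  trivially; this reduces the word problem for a word to the word problem for the level of its
  sections. Scanning a word \<open>u\<close> from the left in blocks of \<open>N\<close> states and replacing the section
  of each block by a geodesic produces, for every root letter, a word representing the section
  of \<open>u\<close>; by strong contraction their total length is at most \<open>(N - 1) / N\<close> times \<open>|u|\<close> plus
  a bounded error from the last, incomplete block. Words shorter than a suitable constant \<open>L\<close>
  are decided by a finite table, longer ones are passed on, so the total length of the levels
  (separators included) decreases geometrically. A three-tape machine computes each level
  from the previous one in time linear in its length, alternating two working tapes; summing
  the geometric series gives linear time.
\<close>

section \<open>Words of states and their sections\<close>

fun act_letter :: "('s \<Rightarrow> 'x \<Rightarrow> 'x) \<Rightarrow> 's list \<Rightarrow> 'x \<Rightarrow> 'x" where
  "act_letter outp [] x = x"
| "act_letter outp (s # w) x = act_letter outp w (outp s x)"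

lemma act_word_Nil [simp]: "act_word tr outp [] = id"
  unfolding act_word_def by (rule ext) simp

lemma act_word_append: "act_word tr outp (v @ w) = act_word tr outp w \<circ> act_word tr outp v"
  unfolding act_word_def by (rule ext) simp

lemma act_word_Nil_input [simp]: "act_word tr outp w [] = []"
  unfolding act_word_def by (induction w) auto

lemma act_word_Cons_input:
  "act_word tr outp w (x # u) = act_letter outp w x # act_word tr outp (section_word tr outp w x) u"
  unfolding act_word_def by (induction w arbitrary: x u) auto

lemma length_section_word [simp]: "length (section_word tr outp w x) = length w"
  by (induction w arbitrary: x) auto

lemma section_word_append:
  "section_word tr outp (v @ w) x = section_word tr outp v x @ section_word tr outp w (act_letter outp v x)"
  by (induction v arbitrary: x) auto

lemma act_letter_append: "act_letter outp (v @ w) x = act_letter outp w (act_letter outp v x)"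
  by (induction v arbitrary: x) auto

lemma bij_act_letter: "(\<And>s. bij (outp s)) \<Longrightarrow> bij (act_letter outp w)"
proof (induction w)
  case Nil
  show ?case by (simp add: bij_def inj_on_def)
next
  case (Cons s w)
  have "act_letter outp (s # w) = act_letter outp w \<circ> outp s" by (rule ext) simp
  then show ?case using Cons bij_comp by metis
qed

lemma act_word_eq_id_iff:
  "act_word tr outp w = id \<longleftrightarrow>
     (\<forall>x. act_letter outp w x = x \<and> act_word tr outp (section_word tr outp w x) = id)"
proof
  assume triv: "act_word tr outp w = id"
  show "\<forall>x. act_letter outp w x = x \<and> act_word tr outp (section_word tr outp w x) = id"
  proof
    fix x
    have "act_word tr outp w (x # u) = x # u" for u using triv by simp
    then show "act_letter outp w x = x \<and> act_word tr outp (section_word tr outp w x) = id"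
      by (auto simp: act_word_Cons_input)
  qed
next
  assume "\<forall>x. act_letter outp w x = x \<and> act_word tr outp (section_word tr outp w x) = id"
  then show "act_word tr outp w = id"
    by (intro ext) (case_tac x; auto simp: act_word_Cons_input)
qed

lemma len_S_le_length: "len_S tr outp w \<le> length w"
  unfolding len_S_def by (rule Least_le) auto

definition geodesic :: "('s \<Rightarrow> 'x \<Rightarrow> 's) \<Rightarrow> ('s \<Rightarrow> 'x \<Rightarrow> 'x) \<Rightarrow> 's list \<Rightarrow> 's list" where
  "geodesic tr outp w = (SOME v. length v = len_S tr outp w \<and> act_word tr outp v = act_word tr outp w)"

lemma length_geodesic: "length (geodesic tr outp w) = len_S tr outp w"
  and act_word_geodesic [simp]: "act_word tr outp (geodesic tr outp w) = act_word tr outp w"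
proof -
  have "\<exists>v. length v = len_S tr outp w \<and> act_word tr outp v = act_word tr outp w"
    unfolding len_S_def by (rule LeastI_ex) auto
  then have "length (geodesic tr outp w) = len_S tr outp w
      \<and> act_word tr outp (geodesic tr outp w) = act_word tr outp w"
    unfolding geodesic_def by (rule someI_ex)
  then show "length (geodesic tr outp w) = len_S tr outp w"
    and "act_word tr outp (geodesic tr outp w) = act_word tr outp w" by blast+
qed

lemma length_geodesic_le: "length (geodesic tr outp w) \<le> length w"
  by (simp add: length_geodesic len_S_le_length)

section \<open>Contracting sections blockwise\<close>

locale block_contracting =
  fixes tr :: "'s::finite \<Rightarrow> 'x::finite \<Rightarrow> 's" and outp :: "'s \<Rightarrow> 'x \<Rightarrow> 'x" and N :: nat
  assumes bij_outp: "\<And>s. bij (outp s)" and N_pos: "0 < N"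
    and contracting: "\<And>w. length w = N \<Longrightarrow> (\<Sum>x\<in>UNIV. len_S tr outp (section_word tr outp w x)) < N"
begin

abbreviation "action \<equiv> act_word tr outp"
abbreviation "sec \<equiv> section_word tr outp"
abbreviation "geod \<equiv> geodesic tr outp"

definition full_blocks :: "'a list \<Rightarrow> 'a list" where
  "full_blocks P = take (length P - length P mod N) P"

definition partial_block :: "'a list \<Rightarrow> 'a list" where
  "partial_block P = drop (length P - length P mod N) P"

lemma full_blocks_append_partial_block [simp]: "full_blocks P @ partial_block P = P"
  by (simp add: full_blocks_def partial_block_def)

lemma length_partial_block: "length (partial_block P) = length P mod N"
  by (simp add: partial_block_def)

lemma length_partial_block_less: "length (partial_block P) < N"
  by (simp add: length_partial_block N_pos)

lemma blocks_snoc_complete: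
  assumes "length (partial_block P) + 1 = N"
  shows "full_blocks (P @ [s]) = P @ [s]" "partial_block (P @ [s]) = []"
proof -
  have "length (P @ [s]) mod N = 0"
    using assms by (simp add: length_partial_block mod_Suc)
  then show "full_blocks (P @ [s]) = P @ [s]" "partial_block (P @ [s]) = []"
    by (simp_all add: full_blocks_def partial_block_def)
qed

lemma blocks_snoc_incomplete:
  assumes "length (partial_block P) + 1 \<noteq> N"
  shows "full_blocks (P @ [s]) = full_blocks P" "partial_block (P @ [s]) = partial_block P @ [s]"
proof -
  have m: "Suc (length P) mod N = Suc (length P mod N)"
    using assms by (simp add: length_partial_block mod_Suc)
  show "full_blocks (P @ [s]) = full_blocks P" "partial_block (P @ [s]) = partial_block P @ [s]"
    by (simp_all add: full_blocks_def partial_block_def m)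
qed

text \<open>Reading a word of states from the left, with state (current block, root letter of the
  current block, output so far): each completed block of \<open>N\<close> states is replaced by a geodesic
  for its section.\<close>
fun compress_step :: "'s \<Rightarrow> 's list \<times> 'x \<times> 's list \<Rightarrow> 's list \<times> 'x \<times> 's list" where
  "compress_step s (b, y, out) =
     (if length (b @ [s]) = N then ([], act_letter outp (b @ [s]) y, out @ geod (sec (b @ [s]) y))
      else (b @ [s], y, out))"

definition compress :: "'x \<Rightarrow> 's list \<Rightarrow> 's list \<times> 'x \<times> 's list" where
  "compress x P = fold compress_step P ([], x, [])"

definition compress_out :: "'x \<Rightarrow> 's list \<Rightarrow> 's list" where
  "compress_out x P = snd (snd (compress x P))"

lemma compress_snoc: "compress x (P @ [s]) = compress_step s (compress x P)"
  by (simp add: compress_def)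

lemma compress_state:
  "compress x P = (partial_block P, act_letter outp (full_blocks P) x, compress_out x P)"
proof (induction P rule: rev_induct)
  case Nil
  show ?case by (simp add: compress_def compress_out_def full_blocks_def partial_block_def)
next
  case (snoc s P)
  show ?case
  proof (cases "length (partial_block P) + 1 = N")
    case True
    have "act_letter outp (partial_block P @ [s]) (act_letter outp (full_blocks P) x)
        = act_letter outp (P @ [s]) x"
      by (metis act_letter_append append_assoc full_blocks_append_partial_block)
    then show ?thesis
      using True
      by (simp add: compress_out_def[of x "P @ [s]"] compress_snoc snoc blocks_snoc_complete)
  next
    case False
    then show ?thesis
      by (simp add: compress_out_def[of x "P @ [s]"] compress_snoc snoc blocks_snoc_incomplete)
  qed
qed

lemma compress_out_snoc:
  "compress_out x (P @ [s]) =
     (if length (partial_block P) + 1 = N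
      then compress_out x P @ geod (sec (partial_block P @ [s]) (act_letter outp (full_blocks P) x))
      else compress_out x P)"
  unfolding compress_out_def[of x "P @ [s]"] compress_snoc by (subst compress_state) simp

lemma compress_step_bounds:
  "length cb < N \<Longrightarrow> compress_step s (cb, y, []) = (cb', y', out) \<Longrightarrow> length cb' < N \<and> length out \<le> N"
  by (auto split: if_splits dest: arg_cong[where f = length] simp: length_geodesic_le[THEN le_trans])

lemma fold_compress_step_out:
  "fold compress_step v (cb, y, out) =
     (case fold compress_step v (cb, y, []) of (cb', y', out') \<Rightarrow> (cb', y', out @ out'))"
proof (induction v arbitrary: cb y out)
  case (Cons s v)
  show ?case
  proof (cases "length (cb @ [s]) = N")
    case True
    let ?y = "act_letter outp (cb @ [s]) y" and ?g = "geod (sec (cb @ [s]) y)"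
    show ?thesis
      using True Cons.IH[of "[]" ?y "out @ ?g"] Cons.IH[of "[]" ?y ?g] by (simp split: prod.splits)
  next
    case False
    then show ?thesis
      using Cons.IH[of "cb @ [s]" y out] Cons.IH[of "cb @ [s]" y "[]"] by (simp split: prod.splits)
  qed
qed simp

lemma compress_append:
  assumes "fold compress_step v (partial_block P, act_letter outp (full_blocks P) x, []) = (cb, y, out)"
  shows "partial_block (P @ v) = cb" "act_letter outp (full_blocks (P @ v)) x = y"
    "compress_out x (P @ v) = compress_out x P @ out"
proof -
  have "compress x (P @ v) = fold compress_step v (compress x P)"
    unfolding compress_def by simp
  also have "\<dots> = (cb, y, compress_out x P @ out)"
    unfolding compress_state[of x P] fold_compress_step_out[of v _ _ "compress_out x P"] assms by simp
  finally show "partial_block (P @ v) = cb" "act_letter outp (full_blocks (P @ v)) x = y"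
    "compress_out x (P @ v) = compress_out x P @ out"
    using compress_state[of x "P @ v"] by simp_all
qed

lemma action_compress_out: "action (compress_out x P) = action (sec (full_blocks P) x)"
proof (induction P rule: rev_induct)
  case Nil
  show ?case by (simp add: compress_out_def compress_def full_blocks_def)
next
  case (snoc s P)
  show ?case
  proof (cases "length (partial_block P) + 1 = N")
    case True
    have "sec (P @ [s]) x
        = sec (full_blocks P) x @ sec (partial_block P @ [s]) (act_letter outp (full_blocks P) x)"
      by (metis append_assoc full_blocks_append_partial_block section_word_append)
    then show ?thesis
      using True snoc by (simp add: compress_out_snoc blocks_snoc_complete act_word_append)
  next
    case False
    then show ?thesis using snoc by (simp add: compress_out_snoc blocks_snoc_incomplete)
  qed
qed

lemma sum_length_geodesic_sections:
  assumes "length b = N" and "bij f"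
  shows "(\<Sum>x\<in>UNIV. length (geod (sec b (f x)))) < N"
proof -
  have "(\<Sum>x\<in>UNIV. length (geod (sec b (f x)))) = (\<Sum>y\<in>UNIV. length (geod (sec b y)))"
    using sum.reindex_bij_betw[of f UNIV UNIV "\<lambda>y. length (geod (sec b y))"] assms(2)
    by (simp add: bij_betw_def)
  also have "\<dots> < N" using contracting[OF assms(1)] by (simp add: length_geodesic)
  finally show ?thesis .
qed

text \<open>The strong contraction inequality, summed over the completed blocks.\<close>
lemma sum_length_compress_out:
  "N * (\<Sum>x\<in>UNIV. length (compress_out x P)) \<le> (N - 1) * length (full_blocks P)"
proof (induction P rule: rev_induct)
  case Nil
  show ?case by (simp add: compress_out_def compress_def full_blocks_def)
next
  case (snoc s P)
  show ?case
  proof (cases "length (partial_block P) + 1 = N")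
    case True
    let ?g = "\<lambda>x. length (geod (sec (partial_block P @ [s]) (act_letter outp (full_blocks P) x)))"
    have "bij (act_letter outp (full_blocks P))" by (rule bij_act_letter[OF bij_outp])
    then have g: "sum ?g UNIV \<le> N - 1"
      using True sum_length_geodesic_sections[of "partial_block P @ [s]"] by fastforce
    have "length P = length (full_blocks P) + length (partial_block P)"
      by (metis full_blocks_append_partial_block length_append)
    then have len: "length (P @ [s]) = length (full_blocks P) + N" using True by simp
    have "N * (\<Sum>x\<in>UNIV. length (compress_out x (P @ [s])))
        = N * (\<Sum>x\<in>UNIV. length (compress_out x P)) + N * sum ?g UNIV"
      using True by (simp add: compress_out_snoc sum.distrib distrib_left)
    also have "\<dots> \<le> (N - 1) * length (full_blocks P) + N * (N - 1)"
      using snoc g by (intro add_mono) simp_all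
    also have "\<dots> = (N - 1) * length (full_blocks (P @ [s]))"
      using True len by (simp add: blocks_snoc_complete algebra_simps)
    finally show ?thesis .
  next
    case False
    then show ?thesis using snoc by (simp add: compress_out_snoc blocks_snoc_incomplete)
  qed
qed

lemma length_compress_out_le: "length (compress_out x P) \<le> length P"
proof -
  have "N * length (compress_out x P) \<le> N * (\<Sum>x\<in>UNIV. length (compress_out x P))"
    by (intro mult_le_mono2 member_le_sum) auto
  also have "\<dots> \<le> N * length (full_blocks P)"
    using sum_length_compress_out[of P] by (meson diff_le_self le_trans mult_le_mono1)
  also have "\<dots> \<le> N * length P"
    by (metis full_blocks_append_partial_block le_add1 length_append mult_le_mono2)
  finally show ?thesis using N_pos by simp
qed

definition contracted_section :: "'x \<Rightarrow> 's list \<Rightarrow> 's list" where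
  "contracted_section x u =
     compress_out x u @ geod (sec (partial_block u) (act_letter outp (full_blocks u) x))"

lemma action_contracted_section: "action (contracted_section x u) = action (sec u x)"
  using full_blocks_append_partial_block[of u]
  by (metis act_word_append action_compress_out act_word_geodesic contracted_section_def
        section_word_append)

lemma act_letter_blocks:
  "act_letter outp u x = act_letter outp (partial_block u) (act_letter outp (full_blocks u) x)"
  by (metis act_letter_append full_blocks_append_partial_block)

definition d :: nat where "d = card (UNIV :: 'x set)"

definition L :: nat where "L = 2 * d * N * N"

lemma d_pos: "0 < d"
  unfolding d_def by (simp add: finite_UNIV_card_ge_0)

lemma N_le_L: "N \<le> L"
  using d_pos N_pos by (simp add: L_def)

lemma L_pos: "0 < L"
  using N_le_L N_pos by simp

lemma sum_length_contracted_section: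
  "N * (\<Sum>x\<in>UNIV. length (contracted_section x u))
     \<le> (N - 1) * length (full_blocks u) + N * d * length (partial_block u)"
proof -
  let ?g = "\<lambda>x. length (geod (sec (partial_block u) (act_letter outp (full_blocks u) x)))"
  have g: "(\<Sum>x\<in>UNIV. ?g x) \<le> d * length (partial_block u)"
    using sum_mono[of UNIV ?g "\<lambda>_. length (partial_block u)"]
    by (simp add: d_def) (metis length_geodesic_le length_section_word)
  have "N * (\<Sum>x\<in>UNIV. length (contracted_section x u))
      = N * (\<Sum>x\<in>UNIV. length (compress_out x u)) + N * (\<Sum>x\<in>UNIV. ?g x)"
    by (simp add: contracted_section_def sum.distrib distrib_left)
  also have "\<dots> \<le> (N - 1) * length (full_blocks u) + N * (d * length (partial_block u))"
    using sum_length_compress_out[of u] g by (intro add_mono) simp_all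
  finally show ?thesis by (simp add: mult.assoc)
qed

text \<open>\<open>L\<close> is chosen so that the incomplete last block is negligible for words of length
  \<open>\<ge> L\<close>.\<close>
lemma contracted_sections_shrink:
  assumes "L \<le> length u"
  shows "2 * N * (\<Sum>x\<in>UNIV. length (contracted_section x u) + 1) \<le> (2 * N - 1) * (length u + 1)"
proof -
  define S where "S = (\<Sum>x\<in>UNIV. length (contracted_section x u))"
  define p where "p = length (full_blocks u)"
  define r where "r = length (partial_block u)"
  have u: "length u = p + r"
    unfolding p_def r_def by (metis full_blocks_append_partial_block length_append)
  have r: "r \<le> N - 1" unfolding r_def using length_partial_block_less[of u] by simp
  have S: "N * S \<le> (N - 1) * p + N * d * r"
    unfolding S_def p_def r_def by (rule sum_length_contracted_section)
  have long: "2 * d * N * N \<le> p + r" using assms u unfolding L_def by simp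
  have "N * d * r \<le> N * d * (N - 1)" using r by (rule mult_le_mono2)
  then have "2 * N * (S + d) \<le> 2 * (N - 1) * p + 2 * d * N * (N - 1) + 2 * N * d"
    using S by (simp add: algebra_simps)
  also have "\<dots> = 2 * (N - 1) * p + 2 * d * N * N"
    using N_pos by (cases N) (simp_all add: algebra_simps)
  also have "\<dots> \<le> 2 * (N - 1) * (p + r) + (p + r) + (2 * N - 1)"
    using long mult_le_mono2[of p "p + r" "2 * (N - 1)"] by linarith
  also have "\<dots> = (2 * N - 1) * (p + r + 1)"
    using N_pos by (cases N) (simp_all add: algebra_simps)
  finally have "2 * N * (S + d) \<le> (2 * N - 1) * (p + r + 1)" .
  moreover have "(\<Sum>x\<in>UNIV. length (contracted_section x u) + 1) = S + d"
    unfolding sum.distrib by (simp add: S_def d_def)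
  ultimately show ?thesis using u by simp
qed

end

section \<open>Levels\<close>

text \<open>Tape alphabet: \<open>0\<close> is the blank, \<open>1\<close> ends a word and \<open>2\<close> delimits a level;
  the states of the automaton are coded by the numbers \<open>\<ge> 3\<close>.\<close>
definition code :: "'s::countable \<Rightarrow> nat" where
  "code s = to_nat s + 3"

lemma code_eq_iff [simp]: "code a = code b \<longleftrightarrow> a = b"
  by (simp add: code_def)

lemma code_ge_3 [simp]: "3 \<le> code s"
  by (simp add: code_def)

lemma code_neq [simp]: "code s \<noteq> 0" "code s \<noteq> 1" "code s \<noteq> 2"
  by (auto simp: code_def)

definition level_code :: "'s::countable list list \<Rightarrow> nat list" where
  "level_code lev = concat (map (\<lambda>u. map code u @ [1]) lev)"

lemma level_code_Nil [simp]: "level_code [] = []"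
  and level_code_Cons [simp]: "level_code (u # lev) = map code u @ [1] @ level_code lev"
  and level_code_append [simp]: "level_code (lev @ lev') = level_code lev @ level_code lev'"
  by (simp_all add: level_code_def)

lemma level_code_concat: "level_code (concat levs) = concat (map level_code levs)"
  by (induction levs) auto

lemma length_level_code: "length (level_code lev) = (\<Sum>u\<leftarrow>lev. length u + 1)"
  by (induction lev) auto

lemma level_code_eq_Nil_iff [simp]: "level_code lev = [] \<longleftrightarrow> lev = []"
  by (cases lev) auto

lemma two_notin_level_code: "2 \<notin> set (level_code lev)"
  by (induction lev) auto

lemma last_level_code: "lev \<noteq> [] \<Longrightarrow> last (level_code lev) = 1"
  by (induction lev) (auto simp: last_append)

lemma sum_sum_list_commute: "(\<Sum>x\<in>A. \<Sum>u\<leftarrow>us. f x u) = (\<Sum>u\<leftarrow>us. \<Sum>x\<in>A. f x u)"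
  by (induction us) (auto simp: sum.distrib)

context block_contracting
begin

definition letters :: "'x list" where
  "letters = (SOME l. set l = UNIV \<and> distinct l)"

lemma letters: "distinct letters" "set letters = UNIV"
  using someI_ex[OF finite_distinct_list[OF finite_UNIV]] unfolding letters_def by blast+

lemma length_letters: "length letters = d"
  using letters distinct_card unfolding d_def by metis

text \<open>Short words are checked directly; of a long word only the action on the root letter is
  checked, its sections being passed on to the next level.\<close>
definition passes_check :: "'x \<Rightarrow> 's list \<Rightarrow> bool" where
  "passes_check x u = (if length u < L then action u = id else act_letter outp u x = x)"

definition level_sections :: "'x \<Rightarrow> 's list list \<Rightarrow> 's list list" where
  "level_sections x lev = map (contracted_section x) (filter (\<lambda>u. L \<le> length u) lev)"

definition next_level :: "'s list list \<Rightarrow> 's list list" where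
  "next_level lev = concat (map (\<lambda>x. level_sections x lev) letters)"

lemma action_eq_id_iff_checks:
  "action u = id \<longleftrightarrow>
     (\<forall>x. passes_check x u) \<and> (L \<le> length u \<longrightarrow> (\<forall>x. action (contracted_section x u) = id))"
  using act_word_eq_id_iff[of tr outp u]
  by (cases "length u < L") (auto simp: passes_check_def action_contracted_section)

lemma level_trivial_iff:
  "(\<forall>u\<in>set lev. action u = id) \<longleftrightarrow>
     (\<forall>x. \<forall>u\<in>set lev. passes_check x u) \<and> (\<forall>v\<in>set (next_level lev). action v = id)"
proof -
  have next_level: "v \<in> set (next_level lev) \<longleftrightarrow>
      (\<exists>x u. u \<in> set lev \<and> L \<le> length u \<and> v = contracted_section x u)" for v
    unfolding next_level_def level_sections_def using letters by auto
  show ?thesis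
  proof
    assume "\<forall>u\<in>set lev. action u = id"
    then show "(\<forall>x. \<forall>u\<in>set lev. passes_check x u) \<and> (\<forall>v\<in>set (next_level lev). action v = id)"
      using action_eq_id_iff_checks next_level by metis
  next
    assume "(\<forall>x. \<forall>u\<in>set lev. passes_check x u) \<and> (\<forall>v\<in>set (next_level lev). action v = id)"
    then show "\<forall>u\<in>set lev. action u = id"
      using action_eq_id_iff_checks next_level by metis
  qed
qed

lemma length_level_code_next_level:
  "length (level_code (next_level lev))
     = (\<Sum>u\<leftarrow>filter (\<lambda>u. L \<le> length u) lev. \<Sum>x\<in>UNIV. length (contracted_section x u) + 1)"
proof -
  let ?long = "filter (\<lambda>u. L \<le> length u) lev"
  have "length (level_code (next_level lev))
      = (\<Sum>x\<leftarrow>letters. \<Sum>u\<leftarrow>?long. length (contracted_section x u) + 1)"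
    by (simp add: next_level_def level_sections_def level_code_concat length_concat
        length_level_code o_def)
  also have "\<dots> = (\<Sum>x\<in>UNIV. \<Sum>u\<leftarrow>?long. length (contracted_section x u) + 1)"
    using sum_list_distinct_conv_sum_set[of letters] letters by simp
  also have "\<dots> = (\<Sum>u\<leftarrow>?long. \<Sum>x\<in>UNIV. length (contracted_section x u) + 1)"
    by (rule sum_sum_list_commute)
  finally show ?thesis .
qed

lemma next_level_shrinks:
  "2 * N * length (level_code (next_level lev)) \<le> (2 * N - 1) * length (level_code lev)"
proof -
  let ?long = "filter (\<lambda>u. L \<le> length u) lev"
  have "2 * N * length (level_code (next_level lev))
      = (\<Sum>u\<leftarrow>?long. 2 * N * (\<Sum>x\<in>UNIV. length (contracted_section x u) + 1))"
    by (simp add: length_level_code_next_level sum_list_const_mult)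
  also have "\<dots> \<le> (\<Sum>u\<leftarrow>?long. (2 * N - 1) * (length u + 1))"
    by (rule sum_list_mono) (use contracted_sections_shrink in force)
  also have "\<dots> \<le> (\<Sum>u\<leftarrow>lev. (2 * N - 1) * (length u + 1))"
    by (rule sum_list_filter_le_nat)
  also have "\<dots> = (2 * N - 1) * length (level_code lev)"
    unfolding length_level_code by (rule sum_list_const_mult)
  finally show ?thesis .
qed

end

section \<open>The machine\<close>

fun tape_write :: "(int \<Rightarrow> nat) \<Rightarrow> int \<Rightarrow> nat list \<Rightarrow> int \<Rightarrow> nat" where
  "tape_write t p [] = t"
| "tape_write t p (a # l) = tape_write (t(p := a)) (p + 1) l"

fun tape_has :: "(int \<Rightarrow> nat) \<Rightarrow> int \<Rightarrow> nat list \<Rightarrow> bool" where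
  "tape_has t p [] = True"
| "tape_has t p (a # l) = (t p = a \<and> tape_has t (p + 1) l)"

lemma tape_write_append: "tape_write t p (l @ l') = tape_write (tape_write t p l) (p + int (length l)) l'"
  by (induction l arbitrary: t p) (auto simp: algebra_simps)

lemma tape_write_below: "q < p \<Longrightarrow> tape_write t p l q = t q"
  by (induction l arbitrary: t p) auto

lemma tape_has_write: "tape_has (tape_write t p l) p l"
  by (induction l arbitrary: t p) (auto simp: tape_write_below)

lemma tape_has_append: "tape_has t p (l @ l') \<longleftrightarrow> tape_has t p l \<and> tape_has t (p + int (length l)) l'"
  by (induction l arbitrary: p) (auto simp: algebra_simps)

lemma tape_has_iff: "tape_has t p l \<longleftrightarrow> (\<forall>j<length l. t (p + int j) = l ! j)"
proof (induction l arbitrary: p)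
  case (Cons a l)
  have "(\<forall>j<length (a # l). t (p + int j) = (a # l) ! j) \<longleftrightarrow>
      t p = a \<and> (\<forall>j<length l. t (p + 1 + int j) = l ! j)"
    by (simp add: All_less_Suc2 algebra_simps)
  then show ?case using Cons by simp
qed simp

lemma tape_has_update_outside:
  "q < p \<or> p + int (length l) \<le> q \<Longrightarrow> tape_has (t(q := a)) p l = tape_has t p l"
  by (induction l arbitrary: p) auto

text \<open>Tape 0 holds the input. Tapes 1 and 2 alternately hold the
  current level (read tape) and receive the next one (write tape); a level is stored as its
  \<open>level_code\<close> between two delimiters \<open>2\<close>. The control keeps a bounded amount of data:
  a short word read so far, or the state of \<open>compress\<close> together with a queue of symbols still
  to be written (\<open>None\<close> stands for the separator \<open>1\<close>). The flag \<open>r\<close> in the control states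
  tells whether tape 1 is the read tape, and \<open>i\<close> indexes the root letter currently treated.
  Testing \<open>action wb = id\<close> in the control is legitimate: it is a finite table, as only words
  shorter than \<open>L\<close> are tested.\<close>
datatype ('s, 'x) scan_mode =
  Short "'s list" | Long "'s list" 'x "'s option list" | Flush "'s option list"

datatype ('s, 'x) ctrl = Init | Copy | CopyEnd
  | Rewind bool nat | CheckEmpty bool nat | SeekStart bool nat
  | Scan bool nat "('s, 'x) scan_mode" | Accept | Reject

instance scan_mode :: (countable, countable) countable by countable_datatype
instance ctrl :: (countable, countable) countable by countable_datatype

fun reads_tape1 :: "('s, 'x) ctrl \<Rightarrow> bool" where
  "reads_tape1 (Rewind r i) = r"
| "reads_tape1 (CheckEmpty r i) = r"
| "reads_tape1 (SeekStart r i) = r"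
| "reads_tape1 (Scan r i m) = r"
| "reads_tape1 _ = True"

definition code_opt :: "'s::countable option \<Rightarrow> nat" where
  "code_opt a = (case a of None \<Rightarrow> 1 | Some s \<Rightarrow> code s)"

definition decode :: "nat \<Rightarrow> 's::countable" where
  "decode a = from_nat (a - 3)"

lemma decode_code [simp]: "decode (code s) = s"
  by (simp add: decode_def code_def)

lemma code_opt_Some [simp]: "code_opt (Some s) = code s"
  and code_opt_None [simp]: "code_opt None = 1"
  by (simp_all add: code_opt_def)

lemma code_opt_comp_Some [simp]: "code_opt \<circ> Some = code"
  by (rule ext) simp

context block_contracting
begin

text \<open>One step of the control on the symbols \<open>r0, rR, rW\<close> under the heads of the input tape, the
  read tape and the write tape; it returns the new control state, the symbols written and the
  head moves, in the same order.\<close>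
definition ctrl_step :: "('s, 'x) ctrl \<Rightarrow> nat \<Rightarrow> nat \<Rightarrow> nat \<Rightarrow>
    ('s, 'x) ctrl \<times> (nat \<times> nat \<times> nat) \<times> (int \<times> int \<times> int)" where
  "ctrl_step q r0 rR rW = (case q of
     Init \<Rightarrow> (Copy, (r0, 2, 2), (0, 1, 1))
   | Copy \<Rightarrow> (if r0 = 0 then (CopyEnd, (r0, 1, rW), (0, 1, 0)) else (Copy, (r0, r0, rW), (1, 1, 0)))
   | CopyEnd \<Rightarrow> (Rewind True 0, (r0, 2, rW), (0, 0, 0))
   | Rewind r i \<Rightarrow> (CheckEmpty r i, (r0, rR, rW), (0, -1, 0))
   | CheckEmpty r i \<Rightarrow> (if rR = 2 then (Accept, (r0, rR, rW), (0, 0, 0))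
       else (SeekStart r i, (r0, rR, rW), (0, -1, 0)))
   | SeekStart r i \<Rightarrow> (if rR = 2 then (Scan r i (Short []), (r0, rR, rW), (0, 1, 0))
       else (SeekStart r i, (r0, rR, rW), (0, -1, 0)))
   | Scan r i m \<Rightarrow> (case m of
        Flush [] \<Rightarrow> (Reject, (r0, rR, rW), (0, 0, 0))
      | Flush (a # oq) \<Rightarrow>
          (if oq = [] then Scan r i (Short []) else Scan r i (Flush oq), (r0, rR, code_opt a), (0, 0, 1))
      | Long cb y (a # oq) \<Rightarrow> (Scan r i (Long cb y oq), (r0, rR, code_opt a), (0, 0, 1))
      | Long cb y [] \<Rightarrow>
          (if 3 \<le> rR then
             (case compress_step (decode rR) (cb, y, []) of
                (cb', y', out) \<Rightarrow> Scan r i (Long cb' y' (map Some out)), (r0, rR, rW), (0, 1, 0))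
           else if rR = 1 then
             (if act_letter outp cb y = letters ! i
              then Scan r i (Flush (map Some (geod (sec cb y)) @ [None])) else Reject,
              (r0, rR, rW), (0, 1, 0))
           else (Reject, (r0, rR, rW), (0, 0, 0)))
      | Short wb \<Rightarrow>
          (if 3 \<le> rR then
             (if length (wb @ [decode rR]) = L
              then (case compress (letters ! i) (wb @ [decode rR]) of
                      (cb', y', out) \<Rightarrow> Scan r i (Long cb' y' (map Some out)))
              else Scan r i (Short (wb @ [decode rR])), (r0, rR, rW), (0, 1, 0))
           else if rR = 1 then
             (if action wb = id then Scan r i (Short []) else Reject, (r0, rR, rW), (0, 1, 0))
           else if rR = 2 then
             (if Suc i < d then (Rewind r (Suc i), (r0, rR, rW), (0, 0, 0))
              else (Rewind (\<not> r) 0, (r0, rR, 2), (0, 1, 0)))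
           else (Reject, (r0, rR, rW), (0, 0, 0))))
   | Accept \<Rightarrow> (Accept, (r0, rR, rW), (0, 0, 0))
   | Reject \<Rightarrow> (Reject, (r0, rR, rW), (0, 0, 0)))"

fun valid_mode :: "('s, 'x) scan_mode \<Rightarrow> bool" where
  "valid_mode (Short wb) = (length wb < L)"
| "valid_mode (Long cb y oq) = (length cb < N \<and> length oq \<le> L)"
| "valid_mode (Flush oq) = (length oq \<le> L + 1)"

fun valid_ctrl :: "('s, 'x) ctrl \<Rightarrow> bool" where
  "valid_ctrl (Rewind r i) = (i < d)"
| "valid_ctrl (CheckEmpty r i) = (i < d)"
| "valid_ctrl (SeekStart r i) = (i < d)"
| "valid_ctrl (Scan r i m) = (i < d \<and> valid_mode m)"
| "valid_ctrl _ = True"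

definition transition :: "nat \<Rightarrow> nat list \<Rightarrow> nat \<times> nat list \<times> int list" where
  "transition n rs = (let q = (from_nat n :: ('s, 'x) ctrl); r = reads_tape1 q;
     rR = (if r then rs ! 1 else rs ! 2); rW = (if r then rs ! 2 else rs ! 1) in
     (case ctrl_step q (rs ! 0) rR rW of (q', (w0, wR, wW), (m0, mR, mW)) \<Rightarrow>
       (to_nat (if valid_ctrl q' then q' else Reject),
        [w0, if r then wR else wW, if r then wW else wR],
        [m0, if r then mR else mW, if r then mW else mR])))"

definition tape_symbols :: "nat set" where
  "tape_symbols = {0, 1, 2} \<union> range (code :: 's \<Rightarrow> nat)"

definition machine :: "'s tm" where
  "machine = \<lparr> tm_k = 3, tm_Q = to_nat ` Collect (valid_ctrl :: ('s, 'x) ctrl \<Rightarrow> bool),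
     tm_Gamma = tape_symbols, tm_enc = code, tm_start = to_nat (Init :: ('s, 'x) ctrl),
     tm_acc = {to_nat (Accept :: ('s, 'x) ctrl)}, tm_rej = {to_nat (Reject :: ('s, 'x) ctrl)},
     tm_delta = transition \<rparr>"

lemma machine_simps:
  "tm_enc machine = code" "tm_k machine = 3" "tm_start machine = to_nat (Init :: ('s, 'x) ctrl)"
  "tm_acc machine = {to_nat (Accept :: ('s, 'x) ctrl)}"
  "tm_rej machine = {to_nat (Reject :: ('s, 'x) ctrl)}"
  by (simp_all add: machine_def)

lemma finite_valid_mode: "finite (Collect valid_mode)"
proof -
  have lists: "finite {l :: 'a::finite list. length l \<le> n}" for n
    using finite_lists_length_le[of "UNIV :: 'a set" n] by simp
  have "Collect valid_mode \<subseteq> Short ` {wb. length wb \<le> L}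
      \<union> (\<lambda>(c, y, oq). Long c y oq) ` ({c. length c \<le> N} \<times> UNIV \<times> {oq. length oq \<le> L})
      \<union> Flush ` {oq. length oq \<le> L + 1}" (is "_ \<subseteq> ?S")
  proof
    fix m assume m: "m \<in> Collect valid_mode"
    show "m \<in> ?S"
    proof (cases m)
      case (Long c y oq)
      then show ?thesis using m by (intro UnI1 UnI2 image_eqI[where x = "(c, y, oq)"]) auto
    qed (use m in auto)
  qed
  moreover have "finite ?S"
    by (intro finite_UnI finite_imageI finite_cartesian_product lists finite_UNIV)
  ultimately show ?thesis by (rule finite_subset)
qed

lemma finite_valid_ctrl: "finite (Collect valid_ctrl)"
proof -
  have "Collect valid_ctrl \<subseteq> {Init, Copy, CopyEnd, Accept, Reject}
      \<union> (\<lambda>(r, i). Rewind r i) ` (UNIV \<times> {..<d}) \<union> (\<lambda>(r, i). CheckEmpty r i) ` (UNIV \<times> {..<d})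
      \<union> (\<lambda>(r, i). SeekStart r i) ` (UNIV \<times> {..<d})
      \<union> (\<lambda>(r, i, m). Scan r i m) ` (UNIV \<times> {..<d} \<times> Collect valid_mode)" (is "_ \<subseteq> ?S")
  proof
    fix q assume q: "q \<in> Collect valid_ctrl"
    show "q \<in> ?S"
    proof (cases q)
      case (Rewind r i)
      then show ?thesis using q by (intro UnI1 UnI2 image_eqI[where x = "(r, i)"]) auto
    next
      case (CheckEmpty r i)
      then show ?thesis using q by (intro UnI1 UnI2 image_eqI[where x = "(r, i)"]) auto
    next
      case (SeekStart r i)
      then show ?thesis using q by (intro UnI1 UnI2 image_eqI[where x = "(r, i)"]) auto
    next
      case (Scan r i m)
      then show ?thesis using q by (intro UnI2 image_eqI[where x = "(r, i, m)"]) auto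
    qed auto
  qed
  moreover have "finite ?S"
    by (intro finite_UnI finite_imageI finite_cartesian_product finite_valid_mode finite_UNIV
        finite_lessThan finite.intros)
  ultimately show ?thesis by (rule finite_subset)
qed

lemma code_opt_in_tape_symbols [simp]: "code_opt (a :: 's option) \<in> tape_symbols"
  and code_in_tape_symbols [simp]: "code (s :: 's) \<in> tape_symbols"
  and special_in_tape_symbols [simp]: "0 \<in> tape_symbols" "Suc 0 \<in> tape_symbols" "2 \<in> tape_symbols"
  by (cases a) (auto simp: code_opt_def tape_symbols_def)

lemma ctrl_step_writes_and_moves:
  assumes "ctrl_step q r0 rR rW = (q', (w0, wR, wW), (m0, mR, mW))"
    and "r0 \<in> tape_symbols" "rR \<in> tape_symbols" "rW \<in> tape_symbols"
  shows "w0 \<in> tape_symbols \<and> wR \<in> tape_symbols \<and> wW \<in> tape_symbols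
    \<and> m0 \<in> {-1, 0, 1} \<and> mR \<in> {-1, 0, 1} \<and> mW \<in> {-1, 0, 1}"
proof (cases q)
  case (Scan r i m)
  then show ?thesis
  proof (cases m)
    case (Short wb)
    then show ?thesis using assms Scan unfolding ctrl_step_def
      by (auto split: if_splits prod.splits)
  next
    case (Long cb y oq)
    then show ?thesis using assms Scan unfolding ctrl_step_def
      by (cases oq) (simp_all split: if_splits prod.splits, auto)
  next
    case (Flush oq)
    then show ?thesis using assms Scan unfolding ctrl_step_def
      by (cases oq) (simp_all split: if_splits, auto)
  qed
qed (use assms in \<open>auto simp: ctrl_step_def split: if_splits\<close>)

lemma wf_machine: "wf_tm machine"
  unfolding wf_tm_def
proof (intro conjI ballI allI impI)
  fix n rs
  assume "n \<in> tm_Q machine - (tm_acc machine \<union> tm_rej machine)"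
    and rs: "length rs = tm_k machine \<and> set rs \<subseteq> tm_Gamma machine"
  then obtain q :: "('s, 'x) ctrl" where q: "n = to_nat q" by (auto simp: machine_def)
  have rs3: "length rs = 3" "rs ! 0 \<in> tape_symbols" "rs ! 1 \<in> tape_symbols" "rs ! 2 \<in> tape_symbols"
    using rs by (auto simp: machine_def)
  let ?r = "reads_tape1 q"
  obtain q' w0 wR wW m0 mR mW where step:
    "ctrl_step q (rs ! 0) (if ?r then rs ! 1 else rs ! 2) (if ?r then rs ! 2 else rs ! 1)
       = (q', (w0, wR, wW), (m0, mR, mW))"
    by (metis prod_cases3)
  have "w0 \<in> tape_symbols \<and> wR \<in> tape_symbols \<and> wW \<in> tape_symbols
      \<and> m0 \<in> {-1, 0, 1} \<and> mR \<in> {-1, 0, 1} \<and> mW \<in> {-1, 0, 1}"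
    by (rule ctrl_step_writes_and_moves[OF step]) (use rs3 in auto)
  moreover have "tm_delta machine n rs = (to_nat (if valid_ctrl q' then q' else Reject),
      [w0, if ?r then wR else wW, if ?r then wW else wR],
      [m0, if ?r then mR else mW, if ?r then mW else mR])"
    using step by (simp add: machine_def transition_def q)
  ultimately show "case tm_delta machine n rs of (q', ws, ms) \<Rightarrow>
      q' \<in> tm_Q machine \<and> length ws = tm_k machine \<and> set ws \<subseteq> tm_Gamma machine
      \<and> length ms = tm_k machine \<and> set ms \<subseteq> {- 1, 0, 1}"
    by (auto simp: machine_def)
qed (auto simp: machine_def tape_symbols_def finite_valid_ctrl inj_def)

definition conf :: "bool \<Rightarrow> ('s, 'x) ctrl \<Rightarrow> (int \<Rightarrow> nat) \<Rightarrow> int \<Rightarrow> (int \<Rightarrow> nat) \<Rightarrow> int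
    \<Rightarrow> (int \<Rightarrow> nat) \<Rightarrow> int \<Rightarrow> config" where
  "conf r q t0 h0 tR hR tW hW = (to_nat q, if r then [t0, tR, tW] else [t0, tW, tR],
       if r then [h0, hR, hW] else [h0, hW, hR])"

lemma fst_conf [simp]: "fst (conf r q t0 h0 tR hR tW hW) = to_nat q"
  by (simp add: conf_def)

lemma conf_swap: "conf r q t0 h0 tR hR tW hW = conf (\<not> r) q t0 h0 tW hW tR hR"
  by (simp add: conf_def)

abbreviation step :: "config \<Rightarrow> config" where
  "step \<equiv> tm_step machine"

lemma step_conf:
  assumes "reads_tape1 q = r" "q \<noteq> Accept" "q \<noteq> Reject"
    and "ctrl_step q (t0 h0) (tR hR) (tW hW) = (q', (w0, wR, wW), (m0, mR, mW))"
  shows "step (conf r q t0 h0 tR hR tW hW) =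
     conf r (if valid_ctrl q' then q' else Reject) (t0(h0 := w0)) (h0 + m0)
       (tR(hR := wR)) (hR + mR) (tW(hW := wW)) (hW + mW)"
proof -
  have "to_nat q \<notin> tm_acc machine \<union> tm_rej machine" using assms by (simp add: machine_def)
  then show ?thesis using assms
    by (cases r) (simp_all add: tm_step_def conf_def machine_def transition_def)
qed

lemma step_init:
  "step (conf True Init t0 h0 tR hR tW hW) = conf True Copy t0 h0 (tR(hR := 2)) (hR + 1) (tW(hW := 2)) (hW + 1)"
  by (subst step_conf[where q' = Copy]) (auto simp: ctrl_step_def)

lemma step_copy:
  "t0 h0 \<noteq> 0 \<Longrightarrow>
   step (conf True Copy t0 h0 tR hR tW hW) = conf True Copy t0 (h0 + 1) (tR(hR := t0 h0)) (hR + 1) tW hW"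
  by (subst step_conf[where q' = Copy]) (auto simp: fun_upd_idem ctrl_step_def)

lemma step_copy_blank:
  "t0 h0 = 0 \<Longrightarrow>
   step (conf True Copy t0 h0 tR hR tW hW) = conf True CopyEnd t0 h0 (tR(hR := 1)) (hR + 1) tW hW"
  by (subst step_conf[where q' = CopyEnd]) (auto simp: fun_upd_idem ctrl_step_def)

lemma step_copy_end:
  "step (conf True CopyEnd t0 h0 tR hR tW hW) = conf True (Rewind True 0) t0 h0 (tR(hR := 2)) hR tW hW"
  by (subst step_conf[where q' = "Rewind True 0"]) (auto simp: fun_upd_idem ctrl_step_def d_pos)

lemma step_rewind:
  "i < d \<Longrightarrow> step (conf r (Rewind r i) t0 h0 tR hR tW hW) = conf r (CheckEmpty r i) t0 h0 tR (hR - 1) tW hW"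
  by (subst step_conf[where q' = "CheckEmpty r i"]) (auto simp: fun_upd_idem ctrl_step_def)

lemma step_check_empty_accept:
  "i < d \<Longrightarrow> tR hR = 2 \<Longrightarrow> step (conf r (CheckEmpty r i) t0 h0 tR hR tW hW) = conf r Accept t0 h0 tR hR tW hW"
  by (subst step_conf[where q' = Accept]) (auto simp: fun_upd_idem ctrl_step_def)

lemma step_check_empty:
  "i < d \<Longrightarrow> tR hR \<noteq> 2 \<Longrightarrow>
   step (conf r (CheckEmpty r i) t0 h0 tR hR tW hW) = conf r (SeekStart r i) t0 h0 tR (hR - 1) tW hW"
  by (subst step_conf[where q' = "SeekStart r i"]) (auto simp: fun_upd_idem ctrl_step_def)

lemma step_seek_found:
  "i < d \<Longrightarrow> tR hR = 2 \<Longrightarrow>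
   step (conf r (SeekStart r i) t0 h0 tR hR tW hW) = conf r (Scan r i (Short [])) t0 h0 tR (hR + 1) tW hW"
  by (subst step_conf[where q' = "Scan r i (Short [])"]) (auto simp: fun_upd_idem ctrl_step_def L_pos)

lemma step_seek:
  "i < d \<Longrightarrow> tR hR \<noteq> 2 \<Longrightarrow>
   step (conf r (SeekStart r i) t0 h0 tR hR tW hW) = conf r (SeekStart r i) t0 h0 tR (hR - 1) tW hW"
  by (subst step_conf[where q' = "SeekStart r i"]) (auto simp: fun_upd_idem ctrl_step_def)

lemma step_read_short:
  "i < d \<Longrightarrow> tR hR = code s \<Longrightarrow> length (wb @ [s]) < L \<Longrightarrow>
   step (conf r (Scan r i (Short wb)) t0 h0 tR hR tW hW) =
     conf r (Scan r i (Short (wb @ [s]))) t0 h0 tR (hR + 1) tW hW"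
  by (subst step_conf[where q' = "Scan r i (Short (wb @ [s]))"]) (auto simp: fun_upd_idem ctrl_step_def)

lemma step_read_short_to_long:
  assumes "i < d" "tR hR = code s" "length (wb @ [s]) = L"
  shows "step (conf r (Scan r i (Short wb)) t0 h0 tR hR tW hW) =
     conf r (Scan r i (Long (partial_block (wb @ [s])) (act_letter outp (full_blocks (wb @ [s])) (letters ! i))
       (map Some (compress_out (letters ! i) (wb @ [s]))))) t0 h0 tR (hR + 1) tW hW"
proof -
  have "length (partial_block (wb @ [s])) < N" "length (compress_out (letters ! i) (wb @ [s])) \<le> L"
    using length_partial_block_less length_compress_out_le assms(3) by metis+
  then show ?thesis
    using assms compress_state[of "letters ! i" "wb @ [s]"]
    by (subst step_conf[where q' = "Scan r i (Long (partial_block (wb @ [s]))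
        (act_letter outp (full_blocks (wb @ [s])) (letters ! i))
        (map Some (compress_out (letters ! i) (wb @ [s]))))"])
       (auto simp: fun_upd_idem ctrl_step_def)
qed

lemma step_end_short:
  "i < d \<Longrightarrow> tR hR = 1 \<Longrightarrow>
   step (conf r (Scan r i (Short wb)) t0 h0 tR hR tW hW) =
     conf r (if action wb = id then Scan r i (Short []) else Reject) t0 h0 tR (hR + 1) tW hW"
  by (subst step_conf[where q' = "if action wb = id then Scan r i (Short []) else Reject"])
     (auto simp: fun_upd_idem ctrl_step_def L_pos)

lemma step_next_letter:
  "Suc i < d \<Longrightarrow> tR hR = 2 \<Longrightarrow>
   step (conf r (Scan r i (Short wb)) t0 h0 tR hR tW hW) = conf r (Rewind r (Suc i)) t0 h0 tR hR tW hW"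
  by (subst step_conf[where q' = "Rewind r (Suc i)"]) (auto simp: fun_upd_idem ctrl_step_def)

lemma step_next_level:
  "Suc i = d \<Longrightarrow> tR hR = 2 \<Longrightarrow>
   step (conf r (Scan r i (Short wb)) t0 h0 tR hR tW hW) =
     conf (\<not> r) (Rewind (\<not> r) 0) t0 h0 (tW(hW := 2)) hW tR (hR + 1)"
  by (subst step_conf[where q' = "Rewind (\<not> r) 0"])
     (auto simp: fun_upd_idem ctrl_step_def d_pos conf_swap[of r])

lemma step_emit:
  "i < d \<Longrightarrow> length cb < N \<Longrightarrow> length (a # oq) \<le> L \<Longrightarrow>
   step (conf r (Scan r i (Long cb y (a # oq))) t0 h0 tR hR tW hW) =
     conf r (Scan r i (Long cb y oq)) t0 h0 tR hR (tW(hW := code_opt a)) (hW + 1)"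
  by (subst step_conf[where q' = "Scan r i (Long cb y oq)"]) (auto simp: fun_upd_idem ctrl_step_def)

lemma step_read_long:
  assumes "i < d" "length cb < N" "tR hR = code s" "compress_step s (cb, y, []) = (cb', y', out)"
  shows "step (conf r (Scan r i (Long cb y [])) t0 h0 tR hR tW hW) =
     conf r (Scan r i (Long cb' y' (map Some out))) t0 h0 tR (hR + 1) tW hW"
proof -
  have "length cb' < N \<and> length out \<le> L" using compress_step_bounds[OF assms(2,4)] N_le_L by auto
  then show ?thesis using assms
    by (subst step_conf[where q' = "Scan r i (Long cb' y' (map Some out))"])
       (auto simp: fun_upd_idem ctrl_step_def)
qed

lemma step_end_long:
  assumes "i < d" "length cb < N" "tR hR = 1"
  shows "step (conf r (Scan r i (Long cb y [])) t0 h0 tR hR tW hW) =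
     conf r (if act_letter outp cb y = letters ! i then Scan r i (Flush (map Some (geod (sec cb y)) @ [None]))
       else Reject) t0 h0 tR (hR + 1) tW hW"
proof -
  have "length (geod (sec cb y)) \<le> L"
    using length_geodesic_le[of tr outp "sec cb y"] assms(2) N_le_L by simp
  then show ?thesis using assms
    by (subst step_conf[where q' = "if act_letter outp cb y = letters ! i
        then Scan r i (Flush (map Some (geod (sec cb y)) @ [None])) else Reject"])
       (auto simp: fun_upd_idem ctrl_step_def)
qed

lemma step_flush:
  "i < d \<Longrightarrow> length (a # oq) \<le> L + 1 \<Longrightarrow>
   step (conf r (Scan r i (Flush (a # oq))) t0 h0 tR hR tW hW) =
     conf r (Scan r i (if oq = [] then Short [] else Flush oq)) t0 h0 tR hR (tW(hW := code_opt a)) (hW + 1)"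
  by (subst step_conf[where q' = "Scan r i (if oq = [] then Short [] else Flush oq)"])
     (auto simp: fun_upd_idem ctrl_step_def L_pos)

section \<open>Runs of the machine\<close>

definition runs :: "nat \<Rightarrow> config \<Rightarrow> config \<Rightarrow> bool" where
  "runs n c c' \<longleftrightarrow> (step ^^ n) c = c'"

definition reaches :: "('s, 'x) ctrl \<Rightarrow> nat \<Rightarrow> config \<Rightarrow> bool" where
  "reaches q n c \<longleftrightarrow> (\<exists>k\<le>n. fst ((step ^^ k) c) = to_nat q)"

definition runs_or_rejects :: "bool \<Rightarrow> nat \<Rightarrow> config \<Rightarrow> config \<Rightarrow> bool" where
  "runs_or_rejects b n c c' \<longleftrightarrow> (if b then runs n c c' else reaches Reject n c)"

definition decides :: "bool \<Rightarrow> nat \<Rightarrow> config \<Rightarrow> bool" where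
  "decides b n c \<longleftrightarrow> reaches (if b then Accept else Reject) n c"

lemma runs_0 [simp]: "runs 0 c c"
  by (simp add: runs_def)

lemma runs_1: "step c = c' \<Longrightarrow> runs 1 c c'"
  by (simp add: runs_def)

lemma runs_trans: "runs m c c' \<Longrightarrow> runs n c' c'' \<Longrightarrow> runs (m + n) c c''"
  by (simp add: runs_def funpow_add add.commute[of m n])

lemma runs_eq: "runs n c c' \<Longrightarrow> n = n' \<Longrightarrow> c' = c'' \<Longrightarrow> runs n' c c''"
  by simp

lemma reaches_now: "fst c = to_nat q \<Longrightarrow> reaches q n c"
  unfolding reaches_def by (rule exI[of _ 0]) simp

lemma reaches_mono: "reaches q m c \<Longrightarrow> m \<le> n \<Longrightarrow> reaches q n c"
  unfolding reaches_def by (meson order_trans)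

lemma reaches_after_runs: "runs m c c' \<Longrightarrow> reaches q n c' \<Longrightarrow> reaches q (m + n) c"
proof -
  assume "runs m c c'" and "reaches q n c'"
  then obtain k where "k \<le> n" "fst ((step ^^ (m + k)) c) = to_nat q"
    unfolding runs_def reaches_def by (auto simp: funpow_add add.commute[of m])
  then show "reaches q (m + n) c" unfolding reaches_def by (metis add_le_mono1 add.commute)
qed

lemma runs_or_rejects_True [simp]: "runs_or_rejects True n c c' = runs n c c'"
  by (simp add: runs_or_rejects_def)

lemma runs_or_rejects_trans:
  assumes "runs_or_rejects b m c c'" and "runs_or_rejects b' n c' c''"
  shows "runs_or_rejects (b \<and> b') (m + n) c c''"
  using assms reaches_mono[of Reject m c "m + n"] reaches_after_runs[of m c c' Reject n]
  by (auto simp: runs_or_rejects_def runs_trans split: if_splits)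

lemma runs_or_rejects_eq:
  "runs_or_rejects b n c c' \<Longrightarrow> b = b' \<Longrightarrow> n = n' \<Longrightarrow> c' = c'' \<Longrightarrow> runs_or_rejects b' n' c c''"
  by simp

lemma runs_or_rejects_step:
  "step c = conf r (if b then q else Reject) t0 h0 tR hR tW hW \<Longrightarrow>
   runs_or_rejects b 1 c (conf r q t0 h0 tR hR tW hW)"
  unfolding runs_or_rejects_def reaches_def by (cases b) (auto simp: runs_def intro!: exI[of _ 1])

lemma decides_trans:
  assumes "runs_or_rejects b m c c'" and "decides b' n c'"
  shows "decides (b \<and> b') (m + n) c"
  using assms reaches_mono[of Reject m c "m + n"] reaches_after_runs[of m c c' _ n]
  by (auto simp: runs_or_rejects_def decides_def split: if_splits)

lemma decides_mono: "decides b m c \<Longrightarrow> m \<le> n \<Longrightarrow> decides b n c"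
  unfolding decides_def by (rule reaches_mono)

context
  fixes i :: nat
  assumes i: "i < d"
begin

lemma emit_queue:
  "length cb < N \<Longrightarrow> length oq \<le> L \<Longrightarrow>
   runs (length oq) (conf r (Scan r i (Long cb y oq)) t0 h0 tR hR tW hW)
     (conf r (Scan r i (Long cb y [])) t0 h0 tR hR (tape_write tW hW (map code_opt oq)) (hW + int (length oq)))"
proof (induction oq arbitrary: tW hW)
  case (Cons a oq)
  have "runs 1 (conf r (Scan r i (Long cb y (a # oq))) t0 h0 tR hR tW hW)
     (conf r (Scan r i (Long cb y oq)) t0 h0 tR hR (tW(hW := code_opt a)) (hW + 1))"
    using Cons.prems by (intro runs_1 step_emit i)
  moreover have "runs (length oq) (conf r (Scan r i (Long cb y oq)) t0 h0 tR hR (tW(hW := code_opt a)) (hW + 1))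
     (conf r (Scan r i (Long cb y [])) t0 h0 tR hR (tape_write (tW(hW := code_opt a)) (hW + 1) (map code_opt oq))
       (hW + 1 + int (length oq)))"
    using Cons.prems by (intro Cons.IH) auto
  ultimately show ?case
    by (rule runs_eq[OF runs_trans]) (simp_all add: algebra_simps)
qed simp

lemma flush_queue:
  "oq \<noteq> [] \<Longrightarrow> length oq \<le> L + 1 \<Longrightarrow>
   runs (length oq) (conf r (Scan r i (Flush oq)) t0 h0 tR hR tW hW)
     (conf r (Scan r i (Short [])) t0 h0 tR hR (tape_write tW hW (map code_opt oq)) (hW + int (length oq)))"
proof (induction oq arbitrary: tW hW)
  case (Cons a oq)
  have first: "runs 1 (conf r (Scan r i (Flush (a # oq))) t0 h0 tR hR tW hW)
     (conf r (Scan r i (if oq = [] then Short [] else Flush oq)) t0 h0 tR hR (tW(hW := code_opt a)) (hW + 1))"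
    using Cons.prems by (intro runs_1 step_flush i)
  show ?case
  proof (cases "oq = []")
    case True
    then show ?thesis using first by (simp add: fun_upd_def)
  next
    case False
    have "runs (length oq) (conf r (Scan r i (Flush oq)) t0 h0 tR hR (tW(hW := code_opt a)) (hW + 1))
       (conf r (Scan r i (Short [])) t0 h0 tR hR (tape_write (tW(hW := code_opt a)) (hW + 1) (map code_opt oq))
         (hW + 1 + int (length oq)))"
      using Cons.prems False by (intro Cons.IH) auto
    with first False show ?thesis
      by (intro runs_eq[OF runs_trans[OF first]]) (simp_all add: algebra_simps)
  qed
qed simp

lemma read_short:
  "tape_has tR hR (map code v) \<Longrightarrow> length (wb @ v) < L \<Longrightarrow>
   runs (length v) (conf r (Scan r i (Short wb)) t0 h0 tR hR tW hW)
     (conf r (Scan r i (Short (wb @ v))) t0 h0 tR (hR + int (length v)) tW hW)"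
proof (induction v arbitrary: wb hR)
  case (Cons s v)
  have "runs 1 (conf r (Scan r i (Short wb)) t0 h0 tR hR tW hW)
     (conf r (Scan r i (Short (wb @ [s]))) t0 h0 tR (hR + 1) tW hW)"
    using Cons.prems by (intro runs_1 step_read_short i) auto
  moreover have "runs (length v) (conf r (Scan r i (Short (wb @ [s]))) t0 h0 tR (hR + 1) tW hW)
     (conf r (Scan r i (Short (wb @ [s] @ v))) t0 h0 tR (hR + 1 + int (length v)) tW hW)"
    using Cons.prems Cons.IH[of "hR + 1" "wb @ [s]"] by simp
  ultimately show ?case
    by (rule runs_eq[OF runs_trans]) (simp_all add: algebra_simps)
qed simp

lemma read_long:
  "length cb < N \<Longrightarrow> length oq \<le> L \<Longrightarrow> tape_has tR hR (map code v) \<Longrightarrow>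
   fold compress_step v (cb, y, []) = (cb', y', out) \<Longrightarrow>
   runs (length oq + length v + length out) (conf r (Scan r i (Long cb y oq)) t0 h0 tR hR tW hW)
     (conf r (Scan r i (Long cb' y' [])) t0 h0 tR (hR + int (length v))
        (tape_write tW hW (map code_opt oq @ map code out)) (hW + int (length oq) + int (length out)))"
proof (induction v arbitrary: cb y oq tW hW hR cb' y' out)
  case Nil
  then show ?case using emit_queue[of cb oq] by simp
next
  case (Cons s v)
  obtain c1 y1 o1 where step1: "compress_step s (cb, y, []) = (c1, y1, o1)" by (metis prod_cases3)
  have bounds: "length c1 < N" "length (map Some o1) \<le> L"
    using compress_step_bounds[OF Cons.prems(1) step1] N_le_L by auto
  obtain c2 y2 o2 where rest: "fold compress_step v (c1, y1, []) = (c2, y2, o2)" by (metis prod_cases3)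
  have "fold compress_step (s # v) (cb, y, []) = (c2, y2, o1 @ o2)"
    using fold_compress_step_out[of v c1 y1 o1] rest step1 by simp
  then have out: "cb' = c2" "y' = y2" "out = o1 @ o2" using Cons.prems(4) by auto
  have tape: "tR hR = code s" "tape_has tR (hR + 1) (map code v)" using Cons.prems(3) by auto
  have "runs (length oq) (conf r (Scan r i (Long cb y oq)) t0 h0 tR hR tW hW)
     (conf r (Scan r i (Long cb y [])) t0 h0 tR hR (tape_write tW hW (map code_opt oq)) (hW + int (length oq)))"
    using emit_queue Cons.prems by blast
  moreover have "runs 1 (conf r (Scan r i (Long cb y [])) t0 h0 tR hR (tape_write tW hW (map code_opt oq)) (hW + int (length oq)))
      (conf r (Scan r i (Long c1 y1 (map Some o1))) t0 h0 tR (hR + 1) (tape_write tW hW (map code_opt oq)) (hW + int (length oq)))"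
    by (rule runs_1, rule step_read_long[where tR = tR and hR = hR, OF i Cons.prems(1) tape(1) step1])
  moreover note Cons.IH[OF bounds tape(2) rest]
  ultimately show ?case
    by (rule runs_eq[OF runs_trans[OF runs_trans]]) (simp_all add: out tape_write_append algebra_simps)
qed

lemma read_long_word:
  assumes "L \<le> length u" and tape: "tape_has tR hR (map code u)"
  defines "x \<equiv> letters ! i"
  shows "runs (length u + length (compress_out x u)) (conf r (Scan r i (Short [])) t0 h0 tR hR tW hW)
    (conf r (Scan r i (Long (partial_block u) (act_letter outp (full_blocks u) x) [])) t0 h0
       tR (hR + int (length u)) (tape_write tW hW (map code (compress_out x u)))
       (hW + int (length (compress_out x u))))"
proof -
  obtain w s u2 where u: "u = (w @ [s]) @ u2" and w: "length (w @ [s]) = L"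
    using assms(1) L_pos
    by (metis append_butlast_last_id append_take_drop_id length_greater_0_conv length_take
        list.size(3) min.absorb2 not_less0)
  let ?u1 = "w @ [s]"
  have Lw: "L = Suc (length w)" using w by simp
  have tape_w: "tape_has tR hR (map code w)" and tape_s: "tR (hR + int (L - 1)) = code s"
    and tape_u2: "tape_has tR (hR + int L) (map code u2)"
    using tape w unfolding u by (auto simp: tape_has_append algebra_simps Lw)
  obtain cb y out2 where rest:
    "fold compress_step u2 (partial_block ?u1, act_letter outp (full_blocks ?u1) x, []) = (cb, y, out2)"
    by (metis prod_cases3)
  note state = compress_append[OF rest, folded u]
  have r1: "runs (L - 1) (conf r (Scan r i (Short [])) t0 h0 tR hR tW hW)
      (conf r (Scan r i (Short w)) t0 h0 tR (hR + int (L - 1)) tW hW)"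
    using read_short[OF tape_w, of "[]"] by (simp add: Lw)
  have r2: "runs 1 (conf r (Scan r i (Short w)) t0 h0 tR (hR + int (L - 1)) tW hW)
      (conf r (Scan r i (Long (partial_block ?u1) (act_letter outp (full_blocks ?u1) x)
         (map Some (compress_out x ?u1)))) t0 h0 tR (hR + int L) tW hW)"
    using runs_1[OF step_read_short_to_long[where tR = tR and hR = "hR + int (L - 1)", OF i tape_s w]]
    by (simp add: x_def Lw algebra_simps)
  have r3: "runs (length (compress_out x ?u1) + length u2 + length out2)
      (conf r (Scan r i (Long (partial_block ?u1) (act_letter outp (full_blocks ?u1) x)
         (map Some (compress_out x ?u1)))) t0 h0 tR (hR + int L) tW hW)
      (conf r (Scan r i (Long cb y [])) t0 h0 tR (hR + int L + int (length u2))
         (tape_write tW hW (map code (compress_out x ?u1) @ map code out2))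
         (hW + int (length (compress_out x ?u1)) + int (length out2)))"
    using read_long[OF length_partial_block_less _ tape_u2 rest, where oq = "map Some (compress_out x ?u1)"]
      length_compress_out_le[of x ?u1] w
    by simp
  have "length u = L + length u2" using u Lw by simp
  with runs_trans[OF runs_trans[OF r1 r2] r3] show ?thesis
    by (rule_tac runs_eq) (simp_all add: state Lw algebra_simps)
qed

lemma check_short_word:
  assumes "length u < L" and "tape_has tR hR (map code u @ [1])"
  shows "runs_or_rejects (action u = id) (length u + 1) (conf r (Scan r i (Short [])) t0 h0 tR hR tW hW)
    (conf r (Scan r i (Short [])) t0 h0 tR (hR + int (length u) + 1) tW hW)"
proof -
  have "runs (length u) (conf r (Scan r i (Short [])) t0 h0 tR hR tW hW)
      (conf r (Scan r i (Short u)) t0 h0 tR (hR + int (length u)) tW hW)"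
    using read_short[of tR hR u "[]"] assms by (simp add: tape_has_append)
  moreover have "runs_or_rejects (action u = id) 1
      (conf r (Scan r i (Short u)) t0 h0 tR (hR + int (length u)) tW hW)
      (conf r (Scan r i (Short [])) t0 h0 tR (hR + int (length u) + 1) tW hW)"
    using assms(2) by (intro runs_or_rejects_step step_end_short i) (simp add: tape_has_append)
  ultimately show ?thesis
    using runs_or_rejects_trans[of True] by fastforce
qed

lemma check_long_word:
  assumes "L \<le> length u" and tape: "tape_has tR hR (map code u @ [1])"
  defines "x \<equiv> letters ! i"
  defines "out \<equiv> map code (contracted_section x u) @ [1]"
  shows "runs_or_rejects (act_letter outp u x = x) (length u + 1 + length out)
    (conf r (Scan r i (Short [])) t0 h0 tR hR tW hW)
    (conf r (Scan r i (Short [])) t0 h0 tR (hR + int (length u) + 1) (tape_write tW hW out)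
       (hW + int (length out)))"
proof -
  let ?y = "act_letter outp (full_blocks u) x" and ?co = "compress_out x u"
  let ?g = "geod (sec (partial_block u) ?y)"
  let ?tW = "tape_write tW hW (map code ?co)" and ?hW = "hW + int (length ?co)"
  have r1: "runs_or_rejects True (length u + length ?co) (conf r (Scan r i (Short [])) t0 h0 tR hR tW hW)
      (conf r (Scan r i (Long (partial_block u) ?y [])) t0 h0 tR (hR + int (length u)) ?tW ?hW)"
    using read_long_word[OF assms(1)] tape unfolding x_def by (simp add: tape_has_append)
  have r2: "runs_or_rejects (act_letter outp u x = x) 1
      (conf r (Scan r i (Long (partial_block u) ?y [])) t0 h0 tR (hR + int (length u)) ?tW ?hW)
      (conf r (Scan r i (Flush (map Some ?g @ [None]))) t0 h0 tR (hR + int (length u) + 1) ?tW ?hW)"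
    using tape unfolding x_def act_letter_blocks[of u]
    by (intro runs_or_rejects_step step_end_long i length_partial_block_less)
       (simp add: tape_has_append)
  have r3: "runs_or_rejects True (length ?g + 1)
      (conf r (Scan r i (Flush (map Some ?g @ [None]))) t0 h0 tR (hR + int (length u) + 1) ?tW ?hW)
      (conf r (Scan r i (Short [])) t0 h0 tR (hR + int (length u) + 1)
         (tape_write ?tW ?hW (map code ?g @ [1])) (?hW + int (length ?g + 1)))"
    using flush_queue[of "map Some ?g @ [None]"] N_le_L
      length_geodesic_le[of tr outp "sec (partial_block u) ?y"] length_partial_block_less[of u]
    by simp
  from runs_or_rejects_trans[OF runs_or_rejects_trans[OF r1 r2] r3] show ?thesis
    unfolding out_def contracted_section_def
    by (rule runs_or_rejects_eq) (simp_all add: tape_write_append algebra_simps)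
qed

lemma check_word:
  assumes "tape_has tR hR (map code u @ [1])"
  defines "out \<equiv> level_code (level_sections (letters ! i) [u])"
  shows "runs_or_rejects (passes_check (letters ! i) u) (length u + 1 + length out)
    (conf r (Scan r i (Short [])) t0 h0 tR hR tW hW)
    (conf r (Scan r i (Short [])) t0 h0 tR (hR + int (length u) + 1) (tape_write tW hW out)
       (hW + int (length out)))"
proof (cases "length u < L")
  case True
  then show ?thesis
    using check_short_word[OF True assms(1)] by (simp add: out_def level_sections_def passes_check_def)
next
  case False
  then show ?thesis
    using check_long_word[OF _ assms(1)] by (simp add: out_def level_sections_def passes_check_def)
qed

lemma scan_level:
  assumes "tape_has tR hR (level_code lev)"
  defines "out \<equiv> level_code (level_sections (letters ! i) lev)"
  shows "runs_or_rejects (\<forall>u\<in>set lev. passes_check (letters ! i) u) (length (level_code lev) + length out)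
    (conf r (Scan r i (Short [])) t0 h0 tR hR tW hW)
    (conf r (Scan r i (Short [])) t0 h0 tR (hR + int (length (level_code lev))) (tape_write tW hW out)
       (hW + int (length out)))"
  using assms(1) unfolding out_def
proof (induction lev arbitrary: hR tW hW)
  case (Cons u lev)
  let ?o = "level_code (level_sections (letters ! i) [u])"
  have "level_sections (letters ! i) (u # lev) = level_sections (letters ! i) [u] @ level_sections (letters ! i) lev"
    by (simp add: level_sections_def)
  moreover have "tape_has tR hR (map code u @ [1])"
    and "tape_has tR (hR + int (length u) + 1) (level_code lev)"
    using Cons.prems by (auto simp: tape_has_append algebra_simps)
  ultimately show ?case
    using runs_or_rejects_trans[OF check_word Cons.IH]
    by (fastforce intro: runs_or_rejects_eq simp: tape_write_append algebra_simps)
qed (simp add: level_sections_def)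

lemma seek_start:
  "tR (s - 1) = 2 \<Longrightarrow> (\<forall>j. s \<le> j \<and> j \<le> s - 1 + int k \<longrightarrow> tR j \<noteq> 2) \<Longrightarrow>
   runs (k + 1) (conf r (SeekStart r i) t0 h0 tR (s - 1 + int k) tW hW)
     (conf r (Scan r i (Short [])) t0 h0 tR s tW hW)"
proof (induction k)
  case 0
  then show ?case using runs_1[OF step_seek_found[where tR = tR and hR = "s - 1", OF i]] by simp
next
  case (Suc k)
  have "tR (s - 1 + int (Suc k)) \<noteq> 2" using Suc.prems(2) by simp
  then have "runs 1 (conf r (SeekStart r i) t0 h0 tR (s - 1 + int (Suc k)) tW hW)
      (conf r (SeekStart r i) t0 h0 tR (s - 1 + int k) tW hW)"
    using runs_1[OF step_seek[where tR = tR and hR = "s - 1 + int (Suc k)", OF i]]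
    by (simp add: algebra_simps)
  from runs_trans[OF this Suc.IH] Suc.prems show ?case by simp
qed

lemma rewind_level:
  assumes "lev \<noteq> []" and "tR (s - 1) = 2" and tape: "tape_has tR s (level_code lev)"
  defines "m \<equiv> length (level_code lev)"
  shows "runs (m + 2) (conf r (Rewind r i) t0 h0 tR (s + int m) tW hW)
    (conf r (Scan r i (Short [])) t0 h0 tR s tW hW)"
proof -
  have m: "0 < m" using assms(1) by (simp add: m_def)
  have last: "tR (s + int (m - 1)) = 1"
    using tape last_level_code[OF assms(1)] m
    by (auto simp: tape_has_iff m_def last_conv_nth)
  have no_delim: "\<forall>j. s \<le> j \<and> j \<le> s - 1 + int (m - 1) \<longrightarrow> tR j \<noteq> 2"
  proof (intro allI impI)
    fix j assume "s \<le> j \<and> j \<le> s - 1 + int (m - 1)"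
    then have "j = s + int (nat (j - s))" "nat (j - s) < m" by auto
    then show "tR j \<noteq> 2"
      using tape two_notin_level_code[of lev] unfolding tape_has_iff m_def by (metis nth_mem)
  qed
  have r1: "runs 1 (conf r (Rewind r i) t0 h0 tR (s + int m) tW hW)
      (conf r (CheckEmpty r i) t0 h0 tR (s + int (m - 1)) tW hW)"
    using runs_1[OF step_rewind[OF i, of r t0 h0 tR "s + int m" tW hW]] m
    by (simp add: of_nat_diff algebra_simps)
  have r2: "runs 1 (conf r (CheckEmpty r i) t0 h0 tR (s + int (m - 1)) tW hW)
      (conf r (SeekStart r i) t0 h0 tR (s - 1 + int (m - 1)) tW hW)"
    using runs_1[OF step_check_empty[where tR = tR and hR = "s + int (m - 1)", OF i]] last
    by (simp add: algebra_simps)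
  from runs_trans[OF runs_trans[OF r1 r2] seek_start[OF assms(2) no_delim]] show ?thesis
    by (rule runs_eq) (use m in simp_all)
qed

lemma rewind_empty_level:
  assumes "tR (s - 1) = 2"
  shows "decides True 2 (conf r (Rewind r i) t0 h0 tR s tW hW)"
proof -
  have "runs (1 + 1) (conf r (Rewind r i) t0 h0 tR s tW hW) (conf r Accept t0 h0 tR (s - 1) tW hW)"
    by (rule runs_trans[OF runs_1[OF step_rewind[OF i]]
          runs_1[OF step_check_empty_accept[where tR = tR and hR = "s - 1", OF i assms]]])
  from reaches_after_runs[OF this reaches_now[of _ Accept 0]] show ?thesis
    by (simp add: decides_def numeral_2_eq_2)
qed

lemma treat_letter:
  assumes "lev \<noteq> []" and "tR (s - 1) = 2" and "tape_has tR s (level_code lev)"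
  defines "m \<equiv> length (level_code lev)" and "out \<equiv> level_code (level_sections (letters ! i) lev)"
  shows "runs_or_rejects (\<forall>u\<in>set lev. passes_check (letters ! i) u) (2 * m + 2 + length out)
    (conf r (Rewind r i) t0 h0 tR (s + int m) tW hW)
    (conf r (Scan r i (Short [])) t0 h0 tR (s + int m) (tape_write tW hW out) (hW + int (length out)))"
proof -
  have "runs_or_rejects True (m + 2) (conf r (Rewind r i) t0 h0 tR (s + int m) tW hW)
      (conf r (Scan r i (Short [])) t0 h0 tR s tW hW)"
    using rewind_level[OF assms(1-3)] by (simp add: m_def)
  from runs_or_rejects_trans[OF this scan_level[OF assms(3)]] show ?thesis
    unfolding m_def out_def by (rule runs_or_rejects_eq) simp_all
qed

end

section \<open>Linear running time\<close>

definition round_output :: "'s list list \<Rightarrow> nat \<Rightarrow> nat list" where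
  "round_output lev i = level_code (concat (map (\<lambda>x. level_sections x lev) (drop i letters)))"

lemma round_output_Suc:
  "i < d \<Longrightarrow> round_output lev i = level_code (level_sections (letters ! i) lev) @ round_output lev (Suc i)"
  unfolding round_output_def using length_letters by (simp add: Cons_nth_drop_Suc[symmetric])

lemma round_output_last: "round_output lev d = []"
  unfolding round_output_def using length_letters by simp

lemma drop_letters: "i < d \<Longrightarrow> drop i letters = letters ! i # drop (Suc i) letters"
  using length_letters by (simp add: Cons_nth_drop_Suc)

lemma last_letter:
  assumes "Suc i = d" and "lev \<noteq> []" and "tR (s - 1) = 2" and "tape_has tR s (level_code lev)"
    and "tR (s + int (length (level_code lev))) = 2"
  defines "m \<equiv> length (level_code lev)" and "out \<equiv> level_code (level_sections (letters ! i) lev)"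
  shows "runs_or_rejects (\<forall>u\<in>set lev. passes_check (letters ! i) u) (2 * m + 3 + length out)
    (conf r (Rewind r i) t0 h0 tR (s + int m) tW hW)
    (conf (\<not> r) (Rewind (\<not> r) 0) t0 h0 ((tape_write tW hW out)(hW + int (length out) := 2))
       (hW + int (length out)) tR (s + int m + 1))"
proof -
  have i: "i < d" using assms(1) by simp
  have "runs_or_rejects True 1
      (conf r (Scan r i (Short [])) t0 h0 tR (s + int m) (tape_write tW hW out) (hW + int (length out)))
      (conf (\<not> r) (Rewind (\<not> r) 0) t0 h0 ((tape_write tW hW out)(hW + int (length out) := 2))
         (hW + int (length out)) tR (s + int m + 1))"
    using runs_1[OF step_next_level[where tR = tR and hR = "s + int m", OF assms(1) assms(5)[folded m_def]]]
    by simp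
  from runs_or_rejects_trans[OF treat_letter[OF i assms(2-4), folded m_def out_def] this]
  show ?thesis by (rule runs_or_rejects_eq) simp_all
qed

lemma round:
  assumes "lev \<noteq> []" and "tR (s - 1) = 2" and "tape_has tR s (level_code lev)"
    and "tR (s + int (length (level_code lev))) = 2"
  defines "m \<equiv> length (level_code lev)"
  shows "i < d \<Longrightarrow> runs_or_rejects (\<forall>x\<in>set (drop i letters). \<forall>u\<in>set lev. passes_check x u)
    ((d - i) * (2 * m + 3) + length (round_output lev i))
    (conf r (Rewind r i) t0 h0 tR (s + int m) tW hW)
    (conf (\<not> r) (Rewind (\<not> r) 0) t0 h0
       ((tape_write tW hW (round_output lev i))(hW + int (length (round_output lev i)) := 2))
       (hW + int (length (round_output lev i))) tR (s + int m + 1))"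
proof (induction "d - Suc i" arbitrary: i tW hW)
  case 0
  then have last: "Suc i = d" by simp
  have out: "round_output lev i = level_code (level_sections (letters ! i) lev)"
    using round_output_Suc[OF 0(2), of lev] round_output_last[of lev] last by simp
  have "drop (Suc i) letters = []" using last length_letters by simp
  from last_letter[OF last assms(1-4), folded m_def, of r t0 h0 tW hW] show ?case
    by (rule runs_or_rejects_eq) (use \<open>drop (Suc i) letters = []\<close> in
        \<open>simp_all add: drop_letters[OF 0(2)] out last[symmetric] fun_upd_def\<close>)
next
  case (Suc k)
  let ?out = "level_code (level_sections (letters ! i) lev)"
  have next_letter: "Suc i < d" and k: "k = d - Suc (Suc i)" and di: "d - i = Suc (d - Suc i)"
    using Suc by simp_all
  have "runs_or_rejects True 1
      (conf r (Scan r i (Short [])) t0 h0 tR (s + int m) (tape_write tW hW ?out) (hW + int (length ?out)))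
      (conf r (Rewind r (Suc i)) t0 h0 tR (s + int m) (tape_write tW hW ?out) (hW + int (length ?out)))"
    using runs_1[OF step_next_letter[where tR = tR and hR = "s + int m", OF next_letter assms(4)[folded m_def]]]
    by simp
  from runs_or_rejects_trans[OF runs_or_rejects_trans[OF treat_letter[OF Suc(3) assms(1-3), folded m_def] this]
      Suc(1)[OF k next_letter]]
  show ?case
    by (rule runs_or_rejects_eq)
       (simp_all add: drop_letters[OF Suc(3)] round_output_Suc[OF Suc(3)] tape_write_append di add_ac)
qed

definition time_factor :: nat where
  "time_factor = 2 * N * (5 * d + 1)"

lemma round_cost_bound:
  assumes "0 < m" and "2 * N * m' \<le> (2 * N - 1) * m"
  shows "d * (2 * m + 3) + m' + time_factor * m' \<le> time_factor * m" and "m' < m"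
proof -
  have N: "2 * N * m = (2 * N - 1) * m + m" using N_pos by (cases N) auto
  then have "2 * N * m' < 2 * N * m" using assms by linarith
  then show "m' < m" by simp
  have "3 * d \<le> 3 * (d * m)" using assms(1) by simp
  moreover have "d * (2 * m + 3) = 2 * (d * m) + 3 * d" "(5 * d + 1) * m = 5 * (d * m) + m"
    by (simp_all add: algebra_simps)
  ultimately have "d * (2 * m + 3) + m' \<le> (5 * d + 1) * m" using \<open>m' < m\<close> by linarith
  moreover have "time_factor * m' = (5 * d + 1) * (2 * N * m')"
    unfolding time_factor_def by (simp add: algebra_simps)
  moreover have "(5 * d + 1) * (2 * N * m') \<le> (5 * d + 1) * ((2 * N - 1) * m)"
    using assms(2) by (rule mult_le_mono2)
  moreover have "time_factor * m = (5 * d + 1) * (2 * N * m)"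
    unfolding time_factor_def by (simp add: algebra_simps)
  moreover have "(5 * d + 1) * (2 * N * m) = (5 * d + 1) * ((2 * N - 1) * m) + (5 * d + 1) * m"
    by (simp only: N distrib_left)
  ultimately show "d * (2 * m + 3) + m' + time_factor * m' \<le> time_factor * m" by linarith
qed

text \<open>Each round costs \<open>O(m)\<close> steps on a level of code length \<open>m\<close>, and the next level is
  shorter by the factor \<open>(2N - 1) / 2N\<close>, so the total time is linear.\<close>
lemma decide_level:
  assumes "tR (s - 1) = 2" and "tape_has tR s (level_code lev)"
    and "tR (s + int (length (level_code lev))) = 2" and "tW (hW - 1) = 2"
  shows "decides (\<forall>u\<in>set lev. action u = id) (time_factor * length (level_code lev) + 2)
    (conf r (Rewind r 0) t0 h0 tR (s + int (length (level_code lev))) tW hW)"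
  using assms
proof (induction "length (level_code lev)" arbitrary: lev r tR s tW hW rule: less_induct)
  case less
  show ?case
  proof (cases "lev = []")
    case True
    then show ?thesis
      using rewind_empty_level[where tR = tR and s = s, OF d_pos less.prems(1)] by (simp add: numeral_2_eq_2)
  next
    case False
    let ?m = "length (level_code lev)" and ?next = "level_code (next_level lev)"
    let ?m' = "length ?next"
    let ?tW = "(tape_write tW hW ?next)(hW + int ?m' := 2)"
    have cost: "d * (2 * ?m + 3) + ?m' + time_factor * ?m' \<le> time_factor * ?m" and shorter: "?m' < ?m"
      using round_cost_bound[OF _ next_level_shrinks[of lev]] False by simp_all
    have checks: "runs_or_rejects (\<forall>x\<in>set letters. \<forall>u\<in>set lev. passes_check x u) (d * (2 * ?m + 3) + ?m')
        (conf r (Rewind r 0) t0 h0 tR (s + int ?m) tW hW)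
        (conf (\<not> r) (Rewind (\<not> r) 0) t0 h0 ?tW (hW + int ?m') tR (s + int ?m + 1))"
      using round[OF False less.prems(1-3) d_pos] by (simp add: round_output_def next_level_def)
    have "decides (\<forall>v\<in>set (next_level lev). action v = id) (time_factor * ?m' + 2)
        (conf (\<not> r) (Rewind (\<not> r) 0) t0 h0 ?tW (hW + int ?m') tR (s + int ?m + 1))"
    proof (rule less.hyps[OF shorter])
      show "?tW (hW - 1) = 2" using less.prems(4) by (simp add: tape_write_below)
      show "tape_has ?tW hW ?next" by (simp add: tape_has_update_outside tape_has_write)
    qed (use less.prems(3) in simp_all)
    from decides_trans[OF checks this] have "decides (\<forall>u\<in>set lev. action u = id)
        (d * (2 * ?m + 3) + ?m' + (time_factor * ?m' + 2)) (conf r (Rewind r 0) t0 h0 tR (s + int ?m) tW hW)"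
      using level_trivial_iff[of lev] letters(2) by simp
    then show ?thesis by (rule decides_mono) (use cost in simp)
  qed
qed

lemma copy_input:
  "tape_has t0 h0 (map code v) \<Longrightarrow> t0 (h0 + int (length v)) = 0 \<Longrightarrow>
   runs (length v + 1) (conf True Copy t0 h0 tR hR tW hW)
     (conf True CopyEnd t0 (h0 + int (length v)) (tape_write tR hR (map code v @ [1]))
        (hR + int (length v) + 1) tW hW)"
proof (induction v arbitrary: h0 tR hR)
  case Nil
  then show ?case using runs_1[OF step_copy_blank] by (simp add: fun_upd_def)
next
  case (Cons a v)
  have "runs 1 (conf True Copy t0 h0 tR hR tW hW) (conf True Copy t0 (h0 + 1) (tR(hR := code a)) (hR + 1) tW hW)"
    using runs_1[OF step_copy[of t0 h0 tR hR tW hW]] Cons.prems by (simp add: code_def)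
  moreover have "runs (length v + 1) (conf True Copy t0 (h0 + 1) (tR(hR := code a)) (hR + 1) tW hW)
      (conf True CopyEnd t0 (h0 + 1 + int (length v)) (tape_write (tR(hR := code a)) (hR + 1) (map code v @ [1]))
         (hR + 1 + int (length v) + 1) tW hW)"
    using Cons.prems by (intro Cons.IH) (simp_all add: algebra_simps)
  ultimately show ?case by (rule runs_eq[OF runs_trans]) (simp_all add: algebra_simps)
qed

definition input_tape :: "'s list \<Rightarrow> int \<Rightarrow> nat" where
  "input_tape w p = (if 0 \<le> p \<and> p < int (length w) then code (w ! nat p) else 0)"

lemma load_input:
  defines "blank \<equiv> (\<lambda>_. 0) :: int \<Rightarrow> nat"
  shows "runs (length w + 3) (tm_init machine w)
    (conf True (Rewind True 0) (input_tape w) (int (length w))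
       ((tape_write (blank(0 := 2)) 1 (level_code [w]))(int (length w) + 2 := 2)) (int (length w) + 2)
       (blank(0 := 2)) 1)"
proof -
  have init: "tm_init machine w = conf True Init (input_tape w) 0 blank 0 blank 0"
    unfolding tm_init_def machine_simps conf_def input_tape_def blank_def
    by (simp add: numeral_2_eq_2 numeral_3_eq_3)
  have "tape_has (input_tape w) 0 (map code w)" by (simp add: tape_has_iff input_tape_def)
  from copy_input[OF this, of "blank(0 := 2)" 1 "blank(0 := 2)" 1]
  have copy: "runs (length w + 1) (conf True Copy (input_tape w) 0 (blank(0 := 2)) 1 (blank(0 := 2)) 1)
      (conf True CopyEnd (input_tape w) (int (length w)) (tape_write (blank(0 := 2)) 1 (level_code [w]))
        (int (length w) + 2) (blank(0 := 2)) 1)"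
    by (simp add: input_tape_def algebra_simps)
  have "runs 1 (conf True Init (input_tape w) 0 blank 0 blank 0)
      (conf True Copy (input_tape w) 0 (blank(0 := 2)) 1 (blank(0 := 2)) 1)"
    using runs_1[OF step_init[of "input_tape w" 0 blank 0 blank 0]] by simp
  from runs_trans[OF runs_trans[OF this copy] runs_1[OF step_copy_end]] show ?thesis
    by (simp add: init numeral_3_eq_3)
qed

lemma decides_in_timeI:
  assumes "\<And>w. decides (w \<in> A) (T (length w)) (tm_init machine w)"
  shows "decides_in_time machine A T"
  unfolding decides_in_time_def
proof
  fix w
  from assms[of w] show "\<exists>n\<le>T (length w). let q = fst ((step ^^ n) (tm_init machine w)) in
      q \<in> tm_acc machine \<union> tm_rej machine \<and> (q \<in> tm_acc machine \<longleftrightarrow> w \<in> A)"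
    by (auto simp: decides_def reaches_def machine_simps Let_def split: if_splits)
qed

lemma machine_decides:
  "decides_in_time machine (word_problem tr outp) (\<lambda>n. (time_factor + 5) * n + (time_factor + 5))"
proof (rule decides_in_timeI)
  fix w :: "'s list"
  let ?n = "length w" and ?blank = "(\<lambda>_. 0) :: int \<Rightarrow> nat"
  let ?tR = "(tape_write (?blank(0 := 2)) 1 (level_code [w]))(int ?n + 2 := 2)"
  have "decides (w \<in> word_problem tr outp) (time_factor * (?n + 1) + 2)
      (conf True (Rewind True 0) (input_tape w) (int ?n) ?tR (int ?n + 2) (?blank(0 := 2)) 1)"
    using decide_level[of ?tR 1 "[w]" "?blank(0 := 2)" 1 True "input_tape w" "int ?n"]
    by (simp add: word_problem_def tape_write_below tape_has_update_outside tape_has_write add.commute)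
  with load_input[of w] have "decides (w \<in> word_problem tr outp)
      (?n + 3 + (time_factor * (?n + 1) + 2)) (tm_init machine w)"
    using decides_trans[of True] by fastforce
  then show "decides (w \<in> word_problem tr outp) ((time_factor + 5) * ?n + (time_factor + 5))
      (tm_init machine w)"
    by (rule decides_mono) (simp add: algebra_simps)
qed

lemma word_problem_linear_time: "DTIME_lin (word_problem tr outp)"
  unfolding DTIME_lin_def using wf_machine machine_decides by blast

end

theorem mainTheorem8:
  fixes tr :: "'s::finite \<Rightarrow> 'x::finite \<Rightarrow> 's"
    and outp :: "'s \<Rightarrow> 'x \<Rightarrow> 'x"
  assumes "invertible_automaton tr outp"
    and "minimal_automaton tr outp"
    and "inverse_closed_automaton tr outp"
    and "strongly_contracting_automaton tr outp"
  shows "DTIME_lin (word_problem tr outp)"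
proof -
  from assms(4) obtain N0 where N0: "\<forall>w. N0 \<le> length w \<longrightarrow>
      (\<Sum>x\<in>UNIV. len_S tr outp (section_word tr outp w x)) < length w"
    unfolding strongly_contracting_automaton_def by blast
  have "block_contracting tr outp (max N0 1)"
  proof
    show "bij (outp s)" for s using assms(1) unfolding invertible_automaton_def by blast
    show "(\<Sum>x\<in>UNIV. len_S tr outp (section_word tr outp w x)) < max N0 1" if "length w = max N0 1" for w
      using N0 that by (metis max.cobounded1)
  qed simp
  then show ?thesis by (rule block_contracting.word_problem_linear_time)
qed

end
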